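(* Let $R$ be a finite commutative unital ring, $N\ge2$ with $N\in R^{\times}$, and $q\in R$ a root of the $N$-th cyclotomic polynomial over $\mathbb{Z}$. Let $\alpha$ be the exponent of $R^{\times}$ (which is divisible by $N$), let $k$ be the integer with $\alpha=kN$, and let $\beta$ be the nilpotence index of $R$. For $u\in R^{\times}$ and $a\in R$, the element \[\mathcal{Q}_u=(u^k-G^{\alpha})G^{\beta}\in T\] is a polynomial $H_N^q$-identity for $\mathcal{B}_{(u,a)}$.
   Context: The nilpotence index $\beta$ of $R$ is a positive integer such that $r^\beta=0$ for every nilpotent $r\in R$ (the largest nilpotency index of a nilpotent element). $H_N^q$ is the Taft Hopf algebra over $R$: generated by $g,x$ with $g^N=1$, $x^N=0$, $xg=qgx$, $\Delta(g)=g\otimes g$, $\Delta(x)=1\otimes x+x\otimes g$, $\varepsilon(g)=1$, $\varepsilon(x)=0$, free over $R$ with basis $\{g^mx^n:0\le m,n<N\}$. $\mathcal{B}_{(u,a)}$ is the $R$-algebra generated by $v_g,v_x$ with $v_g^N=u$, $v_x^N=a$, $v_xv_g=qv_gv_x$, a right $H_N^q$-comodule algebra via $v_g\mapsto v_g\otimes g$, $v_x\mapsto1\otimes x+v_x\otimes g$. Let $Z_i^H$ ($i\ge1$) be copies $\{Z_i^h:h\in H_N^q\}$ of the $R$-module $H_N^q$, $T=T(\bigoplus_iZ_i^H)$ the tensor algebra with coaction $\delta(Z_i^h)=\sum Z_i^{h_1}\otimes h_2$, and $G=Z_1^g$; $u^k$ denotes the scalar $u^k\cdot 1_T$. $P\in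 T$ is a polynomial $H_N^q$-identity for a right $H_N^q$-comodule algebra $B$ if $f(P)=0$ for all right $H_N^q$-comodule algebra maps $f:T\to B$. *)

theory Defs
  imports Complex_Main "HOL-Computational_Algebra.Polynomial"
begin

definition cyclotomic_poly :: "nat \<Rightarrow> int poly" where
  "cyclotomic_poly N = (THE p. map_poly (of_int :: int \<Rightarrow> complex) p =
      (\<Prod>k\<in>{k\<in>{1..N}. coprime k N}. [:- cis (2 * pi * real k / real N), 1:]))"

definition units_exponent :: "'r::comm_ring_1 itself \<Rightarrow> nat" where
  "units_exponent _ = (LEAST n. 0 < n \<and> (\<forall>x::'r. x dvd 1 \<longrightarrow> x ^ n = 1))"

definition nilpotence_index :: "'r::comm_ring_1 itself \<Rightarrow> nat" where
  "nilpotence_index _ = (LEAST n. 0 < n \<and> (\<forall>x::'r. (\<exists>m. x ^ m = 0) \<longrightarrow> x ^ n = 0))"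

text \<open>Elements of the free module with basis 'b are coefficient functions of finite support.\<close>
definition bsupp :: "('b \<Rightarrow> 'r::zero) \<Rightarrow> 'b set" where
  "bsupp v = {b. v b \<noteq> 0}"

definition bcarrier :: "'b set \<Rightarrow> ('b \<Rightarrow> 'r::zero) set" where
  "bcarrier S = {v. finite (bsupp v) \<and> bsupp v \<subseteq> S}"

definition bvec :: "'b \<Rightarrow> 'b \<Rightarrow> 'r::{zero,one}" where
  "bvec b = (\<lambda>c. if c = b then 1 else 0)"

text \<open>Multiplication determined by structure constants m b1 b2 c (coefficient of c in b1*b2).\<close>
definition bmult :: "('b \<Rightarrow> 'b \<Rightarrow> 'b \<Rightarrow> 'r::comm_ring_1) \<Rightarrow> ('b \<Rightarrow> 'r) \<Rightarrow> ('b \<Rightarrow> 'r) \<Rightarrow> ('b \<Rightarrow> 'r)" where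
  "bmult m v w = (\<lambda>c. \<Sum>b1\<in>bsupp v. \<Sum>b2\<in>bsupp w. v b1 * w b2 * m b1 b2 c)"

definition bpow :: "('b \<Rightarrow> 'b \<Rightarrow> 'b \<Rightarrow> 'r::comm_ring_1) \<Rightarrow> ('b \<Rightarrow> 'r) \<Rightarrow> ('b \<Rightarrow> 'r) \<Rightarrow> nat \<Rightarrow> ('b \<Rightarrow> 'r)" where
  "bpow m one v n = (bmult m v ^^ n) one"

definition tens :: "('a \<Rightarrow> 'a \<Rightarrow> 'a \<Rightarrow> 'r::comm_ring_1) \<Rightarrow> ('b \<Rightarrow> 'b \<Rightarrow> 'b \<Rightarrow> 'r) \<Rightarrow>
    ('a \<times> 'b) \<Rightarrow> ('a \<times> 'b) \<Rightarrow> ('a \<times> 'b) \<Rightarrow> 'r" where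
  "tens m1 m2 = (\<lambda>(a1, b1) (a2, b2) (a, b). m1 a1 a2 a * m2 b1 b2 b)"

text \<open>Basis element (m, n) stands for g^m x^n, with m, n < N.
  g^m x^n * g^m' x^n' = q^(n m') g^(m+m' mod N) x^(n+n'), which is 0 if n+n' >= N.\<close>
definition taft_basis :: "nat \<Rightarrow> (nat \<times> nat) set" where
  "taft_basis N = {..<N} \<times> {..<N}"

definition taft_mult :: "nat \<Rightarrow> 'r::comm_ring_1 \<Rightarrow> nat \<times> nat \<Rightarrow> nat \<times> nat \<Rightarrow> nat \<times> nat \<Rightarrow> 'r" where
  "taft_mult N q = (\<lambda>(m, n) (m', n') c.
      if n + n' < N \<and> c = ((m + m') mod N, n + n') then q ^ (n * m') else 0)"

text \<open>Comultiplication, as the algebra map with Delta(g) = g (x) g and Delta(x) = 1 (x) x + x (x) g: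
  Delta(g^m x^n) = Delta(g)^m Delta(x)^n computed in H (x) H.\<close>
definition taft_Delta :: "nat \<Rightarrow> 'r::comm_ring_1 \<Rightarrow> nat \<times> nat \<Rightarrow> ((nat \<times> nat) \<times> (nat \<times> nat) \<Rightarrow> 'r)" where
  "taft_Delta N q = (\<lambda>(m, n).
     (let mm = tens (taft_mult N q) (taft_mult N q);
          one = bvec ((0, 0), (0, 0));
          gg = bvec ((1, 0), (1, 0));
          xx = (\<lambda>c. bvec ((0, 0), (0, 1)) c + bvec ((0, 1), (1, 0)) c)
      in bmult mm (bpow mm one gg m) (bpow mm one xx n)))"

text \<open>Basis element (i, j) stands for v_g^i v_x^j, with i, j < N; relations
  v_g^N = u, v_x^N = a, v_x v_g = q v_g v_x.\<close>
definition Bua_mult :: "nat \<Rightarrow> 'r::comm_ring_1 \<Rightarrow> 'r \<Rightarrow> 'r \<Rightarrow> nat \<times> nat \<Rightarrow> nat \<times> nat \<Rightarrow> nat \<times> nat \<Rightarrow> 'r" where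
  "Bua_mult N q u a = (\<lambda>(i, j) (i', j') c.
      if c = ((i + i') mod N, (j + j') mod N)
      then q ^ (j * i') * (if N \<le> i + i' then u else 1) * (if N \<le> j + j' then a else 1)
      else 0)"

text \<open>Coaction: v_g |-> v_g (x) g, v_x |-> 1 (x) x + v_x (x) g, extended multiplicatively
  (computed in B (x) H) and then linearly.\<close>
definition Bua_rho_basis :: "nat \<Rightarrow> 'r::comm_ring_1 \<Rightarrow> 'r \<Rightarrow> 'r \<Rightarrow> nat \<times> nat \<Rightarrow> ((nat \<times> nat) \<times> (nat \<times> nat) \<Rightarrow> 'r)" where
  "Bua_rho_basis N q u a = (\<lambda>(i, j).
     (let mm = tens (Bua_mult N q u a) (taft_mult N q);
          one = bvec ((0, 0), (0, 0));
          vg = bvec ((1, 0), (1, 0));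
          vx = (\<lambda>c. bvec ((0, 0), (0, 1)) c + bvec ((0, 1), (1, 0)) c)
      in bmult mm (bpow mm one vg i) (bpow mm one vx j)))"

definition Bua_rho :: "nat \<Rightarrow> 'r::comm_ring_1 \<Rightarrow> 'r \<Rightarrow> 'r \<Rightarrow> (nat \<times> nat \<Rightarrow> 'r) \<Rightarrow> ((nat \<times> nat) \<times> (nat \<times> nat) \<Rightarrow> 'r)" where
  "Bua_rho N q u a b = (\<lambda>c. \<Sum>\<beta>\<in>bsupp b. b \<beta> * Bua_rho_basis N q u a \<beta> c)"

text \<open>A letter (i, (m, n)) is the basis element Z_i^(g^m x^n) of the i-th copy Z_i^H (i \<ge> 1);
  T is the free R-module on words of letters, multiplication is concatenation.\<close>
type_synonym letter = "nat \<times> (nat \<times> nat)"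

definition T_basis :: "nat \<Rightarrow> letter list set" where
  "T_basis N = lists ({i. 1 \<le> i} \<times> taft_basis N)"

definition T_mult :: "letter list \<Rightarrow> letter list \<Rightarrow> letter list \<Rightarrow> 'r::comm_ring_1" where
  "T_mult w1 w2 w = (if w = w1 @ w2 then 1 else 0)"

text \<open>delta(Z_i^h) = sum Z_i^(h_1) (x) h_2, extended multiplicatively (in T (x) H) and linearly.\<close>
definition T_delta_letter :: "nat \<Rightarrow> 'r::comm_ring_1 \<Rightarrow> letter \<Rightarrow> (letter list \<times> (nat \<times> nat) \<Rightarrow> 'r)" where
  "T_delta_letter N q = (\<lambda>(i, h) (w, h2).
      (case w of [(i', h1)] \<Rightarrow> if i' = i then taft_Delta N q h (h1, h2) else 0 | _ \<Rightarrow> 0))"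

definition T_delta_word :: "nat \<Rightarrow> 'r::comm_ring_1 \<Rightarrow> letter list \<Rightarrow> (letter list \<times> (nat \<times> nat) \<Rightarrow> 'r)" where
  "T_delta_word N q w = foldr (\<lambda>l acc. bmult (tens T_mult (taft_mult N q)) (T_delta_letter N q l) acc)
       w (bvec ([], (0, 0)))"

definition T_delta :: "nat \<Rightarrow> 'r::comm_ring_1 \<Rightarrow> (letter list \<Rightarrow> 'r) \<Rightarrow> (letter list \<times> (nat \<times> nat) \<Rightarrow> 'r)" where
  "T_delta N q t = (\<lambda>c. \<Sum>w\<in>bsupp t. t w * T_delta_word N q w c)"

definition tens_id :: "((letter list \<Rightarrow> 'r) \<Rightarrow> (nat \<times> nat \<Rightarrow> 'r)) \<Rightarrow>
    (letter list \<times> (nat \<times> nat) \<Rightarrow> 'r) \<Rightarrow> ((nat \<times> nat) \<times> (nat \<times> nat) \<Rightarrow> 'r)" where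
  "tens_id f s = (\<lambda>(b, h). f (\<lambda>w. s (w, h)) b)"

definition comod_alg_hom :: "nat \<Rightarrow> 'r::comm_ring_1 \<Rightarrow> 'r \<Rightarrow> 'r \<Rightarrow>
    ((letter list \<Rightarrow> 'r) \<Rightarrow> (nat \<times> nat \<Rightarrow> 'r)) \<Rightarrow> bool" where
  "comod_alg_hom N q u a f \<longleftrightarrow>
     (\<forall>t\<in>bcarrier (T_basis N). f t \<in> bcarrier (taft_basis N)) \<and>
     (\<forall>t\<in>bcarrier (T_basis N). \<forall>t'\<in>bcarrier (T_basis N).
         f (\<lambda>w. t w + t' w) = (\<lambda>b. f t b + f t' b)) \<and>
     (\<forall>r. \<forall>t\<in>bcarrier (T_basis N). f (\<lambda>w. r * t w) = (\<lambda>b. r * f t b)) \<and>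
     (\<forall>t\<in>bcarrier (T_basis N). \<forall>t'\<in>bcarrier (T_basis N).
         f (bmult T_mult t t') = bmult (Bua_mult N q u a) (f t) (f t')) \<and>
     f (bvec []) = bvec (0, 0) \<and>
     (\<forall>t\<in>bcarrier (T_basis N). Bua_rho N q u a (f t) = tens_id f (T_delta N q t))"

definition poly_H_identity :: "nat \<Rightarrow> 'r::comm_ring_1 \<Rightarrow> 'r \<Rightarrow> 'r \<Rightarrow> (letter list \<Rightarrow> 'r) \<Rightarrow> bool" where
  "poly_H_identity N q u a P \<longleftrightarrow> (\<forall>f. comod_alg_hom N q u a f \<longrightarrow> f P = (\<lambda>_. 0))"

definition T_G :: "letter list \<Rightarrow> 'r::comm_ring_1" where
  "T_G = bvec [(1, (1, 0))]"

definition Q_poly :: "'r::comm_ring_1 \<Rightarrow> nat \<Rightarrow> nat \<Rightarrow> nat \<Rightarrow> letter list \<Rightarrow> 'r" where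
  "Q_poly u k alpha beta = bmult T_mult
      (\<lambda>w. u ^ k * bvec [] w - bpow T_mult (bvec []) T_G alpha w)
      (bpow T_mult (bvec []) T_G beta)"

end

theory Submission
  imports Defs "HOL-Computational_Algebra.Fundamental_Theorem_Algebra"
begin

(* Let c be the coefficient of f(G) for a comodule algebra map f : T -> B_(u,a). Colinearity of f
   and delta(G) = G (x) g force f(G) = c v_g, hence f(G^n) = c^n u^(n div N) v_g^(n mod N). Since N
   is invertible, the root q of the N-th cyclotomic polynomial has multiplicative order exactly N,
   so N divides alpha and f(Q_u) = u^k (1 - c^alpha) c^beta u^(beta div N) v_g^(beta mod N).
   In the finite ring R some power e = c^M is idempotent, and c acts invertibly on eR and
   nilpotently on (1 - e)R (Fitting); hence c^alpha e = e and c^beta (1 - e) = 0, that is,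
   (1 - c^alpha) c^beta = 0. *)

section \<open>Cyclotomic polynomials\<close>

lemma map_poly_of_int_add:
  "map_poly (of_int :: int \<Rightarrow> 'a::comm_ring_1) (p + q) = map_poly of_int p + map_poly of_int q"
  by (intro poly_eqI) (simp add: coeff_map_poly)

lemma map_poly_of_int_diff:
  "map_poly (of_int :: int \<Rightarrow> 'a::comm_ring_1) (p - q) = map_poly of_int p - map_poly of_int q"
  by (intro poly_eqI) (simp add: coeff_map_poly)

lemma map_poly_of_int_mult:
  "map_poly (of_int :: int \<Rightarrow> 'a::comm_ring_1) (p * q) = map_poly of_int p * map_poly of_int q"
  by (intro poly_eqI) (simp add: coeff_map_poly coeff_mult of_int_sum)

lemma map_poly_of_int_prod:
  "map_poly (of_int :: int \<Rightarrow> 'a::comm_ring_1) (\<Prod>i\<in>A. f i) = (\<Prod>i\<in>A. map_poly of_int (f i))"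
  by (induction A rule: infinite_finite_induct) (simp_all add: map_poly_of_int_mult)

lemma map_poly_of_int_monom_minus_one:
  "map_poly (of_int :: int \<Rightarrow> 'a::comm_ring_1) (monom 1 n - 1) = monom 1 n - 1"
  by (simp add: map_poly_of_int_diff map_poly_monom)

lemma map_poly_of_int_inj:
  "map_poly (of_int :: int \<Rightarrow> 'a::ring_char_0) p = map_poly of_int q \<Longrightarrow> p = q"
  by (metis (no_types, lifting) coeff_map_poly of_int_0 of_int_eq_iff poly_eqI)

lemma lead_coeff_map_poly_of_int:
  "lead_coeff (map_poly (of_int :: int \<Rightarrow> 'a::ring_char_0) p) = of_int (lead_coeff p)"
  by (simp add: coeff_map_poly degree_map_poly)

lemma poly_map_poly_of_int_dvd_root:
  assumes "p dvd r" and "poly (map_poly (of_int :: int \<Rightarrow> 'a::comm_ring_1) p) x = 0"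
  shows "poly (map_poly of_int r) x = 0"
  using assms by (auto simp: map_poly_of_int_mult elim!: dvdE)

lemma poly_map_poly_of_int_pderiv_mult_common_root:
  assumes "poly (map_poly (of_int :: int \<Rightarrow> 'a::comm_ring_1) p) x = 0"
    and "poly (map_poly (of_int :: int \<Rightarrow> 'a) r) x = 0"
  shows "poly (map_poly of_int (pderiv (p * r))) x = 0"
  using assms by (simp add: pderiv_mult map_poly_of_int_add map_poly_of_int_mult)

lemma map_poly_of_int_quotient_by_monic:
  assumes monic: "lead_coeff M = 1"
    and factor: "map_poly of_int P = map_poly (of_int :: int \<Rightarrow> 'a::field_char_0) M * Q"
  shows "\<exists>S. map_poly of_int S = Q"
proof (rule ccontr)
  assume no_int: "\<nexists>S. map_poly of_int S = Q"
  have M0: "M \<noteq> 0" using monic by auto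
  obtain S R where SR: "pseudo_divmod P M = (S, R)" by fastforce
  from pseudo_divmod[OF M0 SR] monic
  have P_eq: "P = M * S + R" and R_small: "R = 0 \<or> degree R < degree M" by simp_all
  have deg: "degree (map_poly (of_int :: int \<Rightarrow> 'a) p) = degree p" for p
    by (rule degree_map_poly) simp
  have ne: "Q - map_poly of_int S \<noteq> 0" using no_int by auto
  have "lead_coeff (map_poly (of_int :: int \<Rightarrow> 'a) M) = 1" using monic deg by (simp add: coeff_map_poly)
  hence mM0: "map_poly (of_int :: int \<Rightarrow> 'a) M \<noteq> 0" by auto
  have "map_poly of_int P = map_poly of_int M * map_poly of_int S + (map_poly of_int R :: 'a poly)"
    by (subst P_eq) (simp add: map_poly_of_int_add map_poly_of_int_mult)
  hence "map_poly of_int M * (Q - map_poly of_int S) = (map_poly of_int R :: 'a poly)"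
    using factor by (simp add: algebra_simps)
  moreover from this have "R \<noteq> 0" using mM0 ne by auto
  moreover have "degree M \<le> degree (map_poly of_int M * (Q - map_poly of_int S))"
    using degree_mult_eq[OF mM0 ne] deg by simp
  ultimately show False using R_small deg[of R] by auto
qed

lemma bij_betw_divisor_coprime_pairs:
  fixes n :: nat
  assumes n: "0 < n"
  shows "bij_betw (\<lambda>(d, k). k * (n div d))
           (SIGMA d:{d. d dvd n}. {k\<in>{1..d}. coprime k d}) {1..n}"
proof (rule bij_betw_byWitness[where f' = "\<lambda>z. (n div gcd z n, z div gcd z n)"], safe)
  fix d k assume "d dvd n" "coprime k d"
  then obtain m where "n = d * m" and "0 < m" using n by (auto elim: dvdE)
  moreover have "gcd (k * m) (d * m) = m"
    using \<open>coprime k d\<close> by (metis gcd_mult_distrib_nat coprime_iff_gcd_eq_1 mult.commute nat_mult_1)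
  ultimately show "n div gcd (k * (n div d)) n = d" "k * (n div d) div gcd (k * (n div d)) n = k"
    using n by auto
next
  fix z show "z div gcd z n * (n div (n div gcd z n)) = z" using n by (simp add: div_div_eq_right)
next
  fix d k assume "d dvd n" "k \<in> {1..d}"
  then obtain m where "n = d * m" "0 < m" using n by (auto elim: dvdE)
  thus "k * (n div d) \<in> {1..n}"
    using \<open>k \<in> {1..d}\<close> by auto
next
  fix z assume z: "z \<in> {1..n}"
  show "n div gcd z n dvd n" by (metis dvd_div_mult_self dvd_triv_left gcd_dvd2)
  show "z div gcd z n \<in> {1..n div gcd z n}"
    using z by (auto simp: div_greater_zero_iff dvd_imp_le div_le_mono)
  show "coprime (z div gcd z n) (n div gcd z n)" using z by (simp add: div_gcd_coprime)
qed

definition complex_cyclotomic :: "nat \<Rightarrow> complex poly" where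
  "complex_cyclotomic n = (\<Prod>k\<in>{k\<in>{1..n}. coprime k n}. [:- cis (2 * pi * real k / real n), 1:])"

lemma lead_coeff_complex_cyclotomic: "lead_coeff (complex_cyclotomic n) = 1"
  by (simp add: complex_cyclotomic_def lead_coeff_prod)

lemma monom_minus_one_eq_prod_roots_unity:
  assumes n: "0 < n"
  shows "(monom 1 n - 1 :: complex poly) = (\<Prod>k\<in>{1..n}. [:- cis (2 * pi * real k / real n), 1:])"
proof -
  let ?p = "monom 1 n - 1 :: complex poly"
  let ?F = "\<lambda>k. [:- cis (2 * pi * real k / real n), 1:]"
  have "degree ?p = n"
    using n by (intro antisym degree_diff_le le_degree) (auto simp: degree_monom_le)
  hence lc: "lead_coeff ?p = 1" using n by simp
  have "rsquarefree ?p"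
    unfolding rsquarefree_roots
  proof (intro allI notI)
    fix z assume "poly ?p z = 0 \<and> poly (pderiv ?p) z = 0"
    hence "z ^ n = 1" and "of_nat n * z ^ (n - 1) = 0"
      by (auto simp: pderiv_diff pderiv_monom poly_monom)
    thus False using n by (auto simp: power_0_left)
  qed
  hence "?p = (\<Prod>z | z ^ n = 1. [:-z, 1:])"
    using complex_poly_decompose_rsquarefree[of ?p] lc by (simp add: poly_monom)
  also have "\<dots> = prod ?F {..<n}"
    by (rule prod.reindex_bij_betw[OF bij_betw_roots_unity[OF n], symmetric])
  also have "\<dots> = ?F 0 * prod ?F {1..<n}"
    using n by (simp add: lessThan_atLeast0 prod.atLeast_Suc_lessThan)
  also have "\<dots> = prod ?F {1..<n} * ?F n"
    using n by simp
  also have "\<dots> = prod ?F {1..n}"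
    using n by (simp add: atLeastLessThanSuc_atLeastAtMost[symmetric] prod.atLeastLessThan_Suc)
  finally show ?thesis .
qed

lemma monom_minus_one_eq_prod_complex_cyclotomic:
  assumes n: "0 < n"
  shows "(monom 1 n - 1 :: complex poly) = (\<Prod>d | d dvd n. complex_cyclotomic d)"
proof -
  define F where "F = (\<lambda>m k. [:- cis (2 * pi * real k / real m), 1:])"
  have F_rescale: "F n (k * (n div d)) = F d k" if dn: "d dvd n" for d k
  proof -
    obtain m where "n = d * m" "0 < m" using dn n by (auto elim!: dvdE)
    thus ?thesis by (simp add: F_def mult.assoc)
  qed
  have "(\<Prod>d | d dvd n. complex_cyclotomic d) = (\<Prod>d | d dvd n. \<Prod>k\<in>{k\<in>{1..d}. coprime k d}. F d k)"
    by (simp add: complex_cyclotomic_def F_def)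
  also have "\<dots> = (\<Prod>(d, k)\<in>(SIGMA d:{d. d dvd n}. {k\<in>{1..d}. coprime k d}). F d k)"
    using n by (subst prod.Sigma) auto
  also have "\<dots> = (\<Prod>(d, k)\<in>(SIGMA d:{d. d dvd n}. {k\<in>{1..d}. coprime k d}). F n (k * (n div d)))"
    by (rule prod.cong) (auto simp: F_rescale)
  also have "\<dots> = prod (F n) {1..n}"
    using prod.reindex_bij_betw[OF bij_betw_divisor_coprime_pairs[OF n], of "F n"]
    by (simp add: case_prod_beta')
  finally show ?thesis
    using monom_minus_one_eq_prod_roots_unity[OF n] by (simp add: F_def)
qed

lemma complex_cyclotomic_integral: "\<exists>p. map_poly of_int p = complex_cyclotomic n"
proof (induction n rule: less_induct)
  case (less n)
  show ?case
  proof (cases "n = 0")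
    case True
    have "complex_cyclotomic 0 = 1" unfolding complex_cyclotomic_def by simp
    thus ?thesis using True by (intro exI[of _ 1]) simp
  next
    case False
    let ?D = "{d. d dvd n} - {n}"
    have "\<exists>p. map_poly of_int p = complex_cyclotomic d" if "d \<in> ?D" for d
      using that False dvd_imp_le[of d n] less.IH[of d] by auto
    then obtain p where p: "\<And>d. d \<in> ?D \<Longrightarrow> map_poly of_int (p d) = complex_cyclotomic d"
      by metis
    define M where "M = (\<Prod>d\<in>?D. p d)"
    have map_M: "map_poly of_int M = (\<Prod>d\<in>?D. complex_cyclotomic d)"
      unfolding M_def map_poly_of_int_prod using p by simp
    have "lead_coeff (map_poly of_int M :: complex poly) = 1"
      using map_M by (simp add: lead_coeff_prod lead_coeff_complex_cyclotomic)
    hence "lead_coeff M = 1" by (simp add: lead_coeff_map_poly_of_int)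
    moreover have "(\<Prod>d | d dvd n. complex_cyclotomic d) = complex_cyclotomic n * map_poly of_int M"
      using prod.remove[of "{d. d dvd n}" n complex_cyclotomic] False map_M by simp
    hence "map_poly of_int (monom 1 n - 1) = map_poly of_int M * complex_cyclotomic n"
      using monom_minus_one_eq_prod_complex_cyclotomic[of n] False
      by (simp add: map_poly_of_int_monom_minus_one mult.commute)
    ultimately show ?thesis by (rule map_poly_of_int_quotient_by_monic)
  qed
qed

lemma map_poly_cyclotomic_poly: "map_poly of_int (cyclotomic_poly n) = complex_cyclotomic n"
proof -
  have "\<exists>!p. map_poly (of_int :: int \<Rightarrow> complex) p = complex_cyclotomic n"
    using complex_cyclotomic_integral map_poly_of_int_inj by metis
  from theI'[OF this] show ?thesis
    by (simp add: cyclotomic_poly_def complex_cyclotomic_def)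
qed

lemma monom_minus_one_eq_prod_cyclotomic_poly:
  "0 < n \<Longrightarrow> (monom 1 n - 1 :: int poly) = (\<Prod>d | d dvd n. cyclotomic_poly d)"
  by (rule map_poly_of_int_inj[where 'a = complex])
     (simp add: map_poly_of_int_monom_minus_one map_poly_of_int_prod map_poly_cyclotomic_poly
                monom_minus_one_eq_prod_complex_cyclotomic)

lemma cyclotomic_poly_dvd_monom_minus_one:
  "0 < n \<Longrightarrow> cyclotomic_poly n dvd monom 1 n - 1"
  by (simp add: monom_minus_one_eq_prod_cyclotomic_poly dvd_prodI)

lemma cyclotomic_poly_mult_monom_minus_one_dvd:
  assumes "d dvd n" "0 < d" "d < n"
  shows "cyclotomic_poly n * (monom 1 d - 1) dvd monom 1 n - 1"
proof -
  have n: "0 < n" using assms by simp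
  have "(\<Prod>e | e dvd d. cyclotomic_poly e) dvd (\<Prod>e\<in>{e. e dvd n} - {n}. cyclotomic_poly e)"
    using assms n by (intro prod_dvd_prod_subset) (auto intro: dvd_trans dest: dvd_imp_le)
  hence "cyclotomic_poly n * (monom 1 d - 1) dvd
           cyclotomic_poly n * (\<Prod>e\<in>{e. e dvd n} - {n}. cyclotomic_poly e)"
    using assms by (simp add: monom_minus_one_eq_prod_cyclotomic_poly)
  also have "\<dots> = monom 1 n - 1"
    using n by (simp add: monom_minus_one_eq_prod_cyclotomic_poly prod.remove[of _ n])
  finally show ?thesis .
qed

lemma cyclotomic_root_power_eq_one_iff:
  fixes q :: "'a::comm_ring_1"
  assumes N: "0 < N" and N_unit: "(of_nat N :: 'a) dvd 1"
    and root: "poly (map_poly of_int (cyclotomic_poly N)) q = 0"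
  shows "q ^ m = 1 \<longleftrightarrow> N dvd m"
proof -
  have eval: "poly (map_poly (of_int :: int \<Rightarrow> 'a) (monom 1 n - 1)) q = q ^ n - 1" for n
    by (simp add: map_poly_of_int_monom_minus_one poly_monom)
  have qN: "q ^ N = 1"
    using poly_map_poly_of_int_dvd_root[OF cyclotomic_poly_dvd_monom_minus_one[OF N] root]
    by (simp add: eval)
  \<comment> \<open>A root of both factors would be a double root of X^N - 1, whose derivative N X^(N-1)
    does not vanish at the unit q.\<close>
  have no_smaller_period: False if d: "d dvd N" "0 < d" "d < N" and qd: "q ^ d = 1" for d
  proof -
    obtain B where B: "monom 1 N - 1 = cyclotomic_poly N * ((monom 1 d - 1) * B)"
      using cyclotomic_poly_mult_monom_minus_one_dvd[OF d] by (metis dvdE mult.assoc)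
    have "poly (map_poly of_int ((monom 1 d - 1) * B)) q = 0"
      using qd by (simp add: map_poly_of_int_mult eval)
    from poly_map_poly_of_int_pderiv_mult_common_root[OF root this]
    have "of_nat N * q ^ (N - 1) = (0 :: 'a)"
      by (simp flip: B add: pderiv_diff pderiv_monom map_poly_monom poly_monom)
    hence "of_nat N * q ^ N = (0 :: 'a)"
      using N by (metis mult.assoc mult_zero_left power_minus_mult)
    thus False using N_unit qN by simp
  qed
  show ?thesis
  proof
    assume qm: "q ^ m = 1"
    show "N dvd m"
    proof (cases "m = 0")
      case False
      obtain x y where "m * x = N * y + gcd m N" using bezout_nat[OF False] by blast
      hence "q ^ gcd m N = 1"
        using qm qN by (metis power_add power_mult power_one mult_1)
      moreover have "gcd m N \<le> N" "0 < gcd m N" using N by (simp_all add: dvd_imp_le)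
      ultimately have "gcd m N = N" using no_smaller_period[of "gcd m N"] by fastforce
      thus ?thesis by (metis gcd_dvd1)
    qed simp
  next
    assume "N dvd m"
    thus "q ^ m = 1" using qN by (auto simp: power_mult elim!: dvdE)
  qed
qed

section \<open>Finite commutative rings\<close>

lemma power_collision_finite:
  fixes x :: "'a::{monoid_mult, finite}"
  obtains i p where "0 < p" "i + p \<le> card (UNIV :: 'a set)" "x ^ (i + p) = x ^ i"
proof -
  have "\<not> inj_on (\<lambda>i. x ^ i) {..card (UNIV :: 'a set)}"
  proof
    assume "inj_on (\<lambda>i. x ^ i) {..card (UNIV :: 'a set)}"
    from card_inj_on_le[OF this subset_UNIV finite_UNIV] show False by simp
  qed
  then obtain i j where "i \<le> card (UNIV :: 'a set)" "j \<le> card (UNIV :: 'a set)" "i \<noteq> j" "x ^ i = x ^ j"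
    unfolding inj_on_def by auto
  thus ?thesis using that[of "j - i" i] that[of "i - j" j] by (cases "i < j") auto
qed

lemma power_add_period:
  fixes x :: "'a::monoid_mult"
  assumes period: "x ^ (i + p) = x ^ i" and "i \<le> s"
  shows "x ^ (s + t * p) = x ^ s"
proof (induction t)
  case (Suc t)
  have step: "x ^ (s' + p) = x ^ s'" if "i \<le> s'" for s'
  proof -
    have "x ^ (s' + p) = x ^ (s' - i) * x ^ (i + p)" using that by (simp flip: power_add)
    also have "\<dots> = x ^ s'" using that by (simp add: period flip: power_add)
    finally show ?thesis .
  qed
  have "x ^ (s + Suc t * p) = x ^ (s + t * p + p)" by (simp add: algebra_simps)
  also have "\<dots> = x ^ (s + t * p)" using step \<open>i \<le> s\<close> by simp
  finally show ?case using Suc.IH by simp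
qed simp

lemma power_eq_0_mono: "(x :: 'a::{monoid_mult, mult_zero}) ^ m = 0 \<Longrightarrow> m \<le> n \<Longrightarrow> x ^ n = 0"
  by (metis le_add_diff_inverse power_add mult_zero_left)

lemma units_exponent_spec:
  "\<forall>x::'a::{comm_ring_1, finite}. x dvd 1 \<longrightarrow> x ^ units_exponent TYPE('a) = 1"
proof -
  have "x ^ fact (card (UNIV :: 'a set)) = 1" if "x dvd 1" for x :: 'a
  proof -
    obtain i p where p: "0 < p" "i + p \<le> card (UNIV :: 'a set)" "x ^ (i + p) = x ^ i"
      by (rule power_collision_finite)
    from \<open>x dvd 1\<close> obtain y where y: "x ^ i * y = 1" by (metis dvd_power_same power_one dvdE)
    have "x ^ p = (x ^ i * y) * x ^ p" using y by simp
    also have "\<dots> = y * x ^ (i + p)" by (simp add: power_add ac_simps)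
    also have "\<dots> = 1" using p(3) y by (simp add: mult.commute)
    finally have "x ^ p = 1" .
    moreover have "p dvd fact (card (UNIV :: 'a set))" using p by (intro dvd_fact) auto
    ultimately show ?thesis by (auto simp: power_mult elim!: dvdE)
  qed
  hence "\<exists>n>0. \<forall>x::'a. x dvd 1 \<longrightarrow> x ^ n = 1"
    by (intro exI[of _ "fact (card (UNIV :: 'a set))"]) simp
  from LeastI_ex[OF this] show ?thesis unfolding units_exponent_def by blast
qed

lemma power_units_exponent: "(x :: 'a::{comm_ring_1, finite}) dvd 1 \<Longrightarrow> x ^ units_exponent TYPE('a) = 1"
  using units_exponent_spec by blast

lemma nilpotence_index_spec:
  "0 < nilpotence_index TYPE('a::{comm_ring_1, finite}) \<and>
   (\<forall>x::'a. (\<exists>m. x ^ m = 0) \<longrightarrow> x ^ nilpotence_index TYPE('a) = 0)"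
proof -
  have "x ^ card (UNIV :: 'a set) = 0" if "x ^ m = 0" for x :: 'a and m
  proof -
    obtain i p where p: "0 < p" "i + p \<le> card (UNIV :: 'a set)" "x ^ (i + p) = x ^ i"
      by (rule power_collision_finite)
    have "m \<le> i + m * p" using p(1) by (simp add: trans_le_add2)
    hence "x ^ (i + m * p) = 0" using that by (rule power_eq_0_mono[rotated])
    hence "x ^ i = 0" using power_add_period[OF p(3) order.refl] by simp
    thus ?thesis using p(2) power_eq_0_mono[of x i "card (UNIV :: 'a set)"] by simp
  qed
  hence "\<exists>n>0. \<forall>x::'a. (\<exists>m. x ^ m = 0) \<longrightarrow> x ^ n = 0"
    by (intro exI[of _ "card (UNIV :: 'a set)"]) (auto simp: finite_UNIV_card_ge_0)
  from LeastI_ex[OF this] show ?thesis unfolding nilpotence_index_def by blast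
qed

lemma nilpotence_index_pos: "0 < nilpotence_index TYPE('a::{comm_ring_1, finite})"
  using nilpotence_index_spec by blast

lemma power_nilpotence_index: "(x :: 'a::{comm_ring_1, finite}) ^ m = 0 \<Longrightarrow> x ^ nilpotence_index TYPE('a) = 0"
  using nilpotence_index_spec by blast

lemma finite_power_idempotent:
  fixes x :: "'a::{monoid_mult, finite}"
  obtains M where "0 < M" "x ^ M * x ^ M = x ^ M"
proof -
  obtain i p where p: "0 < p" "x ^ (i + p) = x ^ i" by (rule power_collision_finite)
  have "i \<le> (i + 1) * p" using p(1) mult_le_mono1[of 1 p "i + 1"] by (simp add: mult.commute)
  from power_add_period[OF p(2) this, of "i + 1"] p(1) show ?thesis
    by (intro that[of "(i + 1) * p"]) (simp_all add: power_add)
qed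

lemma idempotent_power: "(e :: 'a::monoid_mult) * e = e \<Longrightarrow> 0 < n \<Longrightarrow> e ^ n = e"
proof (induction n)
  case (Suc n)
  thus ?case by (cases n) (simp_all add: power_Suc2)
qed simp

text \<open>The unit w = c e + (1 - e), with inverse c^(M-1) e + (1 - e), has powers c^n e + (1 - e).\<close>
lemma power_units_exponent_mult_idempotent_power:
  fixes c :: "'a::{comm_ring_1, finite}"
  assumes idem: "e * e = e" and e: "c ^ M = e" and M: "0 < M"
  shows "c ^ units_exponent TYPE('a) * e = e"
proof -
  define w where "w = c * e + (1 - e)"
  have cancel: "e * (1 - e) = 0" "(1 - e) * (1 - e) = 1 - e"
    using idem by (simp_all add: algebra_simps)
  have w_power: "w ^ n = c ^ n * e + (1 - e)" for n
  proof (induction n)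
    case (Suc n)
    have "w ^ Suc n = (c ^ n * e + (1 - e)) * (c * e + (1 - e))"
      by (simp only: power_Suc2 Suc.IH) (simp add: w_def)
    also have "\<dots> = c ^ Suc n * (e * e) + (c ^ n + c) * (e * (1 - e)) + (1 - e) * (1 - e)"
      by (simp add: algebra_simps)
    finally show ?case using idem cancel by simp
  qed (simp add: w_def)
  have "w * (c ^ (M - 1) * e + (1 - e)) = c ^ M * (e * e) + (c + c ^ (M - 1)) * (e * (1 - e)) + (1 - e) * (1 - e)"
    using M by (simp add: w_def algebra_simps power_eq_if)
  also have "\<dots> = 1" using idem cancel e by simp
  finally have "w dvd 1" by (rule dvdI[OF sym])
  hence "c ^ units_exponent TYPE('a) * e + (1 - e) = 1"
    using power_units_exponent w_power by metis
  thus ?thesis by (simp add: algebra_simps)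
qed

lemma power_nilpotence_index_mult_complement_idempotent_power:
  fixes c :: "'a::{comm_ring_1, finite}"
  assumes idem: "e * e = e" and e: "c ^ M = e" and M: "0 < M"
  shows "c ^ nilpotence_index TYPE('a) * (1 - e) = 0"
proof -
  have idem': "(1 - e) * (1 - e) = 1 - e" using idem by (simp add: algebra_simps)
  have "(c * (1 - e)) ^ M = e * (1 - e)"
    using idempotent_power[OF idem' M] e by (simp add: power_mult_distrib)
  also have "\<dots> = 0" using idem by (simp add: algebra_simps)
  finally have "(c * (1 - e)) ^ nilpotence_index TYPE('a) = 0" by (rule power_nilpotence_index)
  thus ?thesis
    using idempotent_power[OF idem' nilpotence_index_pos[where 'a = 'a]] by (simp add: power_mult_distrib)
qed

text \<open>Fitting's decomposition: c acts invertibly on the corner e R and nilpotently on (1 - e) R.\<close>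
lemma power_units_exponent_mult_power_nilpotence_index:
  fixes c :: "'a::{comm_ring_1, finite}"
  shows "c ^ units_exponent TYPE('a) * c ^ nilpotence_index TYPE('a) = c ^ nilpotence_index TYPE('a)"
proof -
  obtain M where M: "0 < M" "c ^ M * c ^ M = c ^ M" by (rule finite_power_idempotent)
  let ?e = "c ^ M" and ?\<alpha> = "units_exponent TYPE('a)" and ?\<beta> = "nilpotence_index TYPE('a)"
  have "c ^ ?\<beta> = c ^ ?\<beta> * ?e + c ^ ?\<beta> * (1 - ?e)" by (simp add: algebra_simps)
  hence corner: "c ^ ?\<beta> = c ^ ?\<beta> * ?e"
    using power_nilpotence_index_mult_complement_idempotent_power[OF M(2) refl M(1)] by simp
  also have "\<dots> = c ^ ?\<beta> * (c ^ ?\<alpha> * ?e)"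
    using power_units_exponent_mult_idempotent_power[OF M(2) refl M(1)] by simp
  also have "\<dots> = c ^ ?\<alpha> * (c ^ ?\<beta> * ?e)" by (simp only: ac_simps)
  also have "\<dots> = c ^ ?\<alpha> * c ^ ?\<beta>" by (simp only: corner[symmetric])
  finally show ?thesis by simp
qed

section \<open>Free modules with structure constants\<close>

lemma bsupp_single: "bsupp (\<lambda>b. if b = p then r else 0) = (if r = 0 then {} else {p})"
  by (auto simp: bsupp_def)

lemma bmult_single_single:
  "bmult m (\<lambda>b. if b = p then r else 0) (\<lambda>b. if b = p' then s else 0) = (\<lambda>c. r * s * m p p' c)"
  unfolding bmult_def bsupp_single by auto

lemma bmult_bvec_bvec: "bmult m (bvec p) (bvec p') = m p p'"
  using bmult_single_single[of m p 1 p' 1] by (simp add: bvec_def)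

lemma bsupp_bvec: "bsupp (bvec b :: _ \<Rightarrow> 'r::zero_neq_one) = {b}"
  by (simp add: bvec_def bsupp_single)

lemma bmult_eq_0I:
  assumes "\<And>b1 b2. b1 \<in> bsupp v \<Longrightarrow> b2 \<in> bsupp w \<Longrightarrow> m b1 b2 c = 0"
  shows "bmult m v w c = 0"
  using assms by (simp add: bmult_def)

lemma bmult_eq_single_term:
  assumes "finite (bsupp v)" "finite (bsupp w)"
    and only: "\<And>b1 b2. b1 \<in> bsupp v \<Longrightarrow> b2 \<in> bsupp w \<Longrightarrow> m b1 b2 c \<noteq> 0 \<Longrightarrow> b1 = p1 \<and> b2 = p2"
  shows "bmult m v w c = v p1 * w p2 * m p1 p2 c"
proof -
  let ?F = "\<lambda>(b1, b2). v b1 * w b2 * m b1 b2 c"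
  have "bmult m v w c = sum ?F (bsupp v \<times> bsupp w)"
    by (simp add: bmult_def sum.cartesian_product)
  also have "\<dots> = sum ?F ((bsupp v \<times> bsupp w) \<inter> {(p1, p2)})"
  proof (rule sum.mono_neutral_right)
    show "\<forall>x\<in>bsupp v \<times> bsupp w - (bsupp v \<times> bsupp w) \<inter> {(p1, p2)}. ?F x = 0"
      using only by fastforce
  qed (use assms(1,2) in auto)
  also have "\<dots> = v p1 * w p2 * m p1 p2 c"
    by (cases "(p1, p2) \<in> bsupp v \<times> bsupp w") (auto simp: bsupp_def)
  finally show ?thesis .
qed

lemma bvec_in_bcarrier: "b \<in> S \<Longrightarrow> bvec b \<in> bcarrier S"
  by (auto simp: bcarrier_def bsupp_def bvec_def)

lemma bcarrier_lincomb:
  assumes "s \<in> bcarrier S" "t \<in> bcarrier S"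
  shows "(\<lambda>x. r * s x + r' * t x :: 'r::comm_ring_1) \<in> bcarrier S"
proof -
  have "bsupp (\<lambda>x. r * s x + r' * t x) \<subseteq> bsupp s \<union> bsupp t" by (auto simp: bsupp_def)
  thus ?thesis using assms unfolding bcarrier_def by (auto intro: finite_subset)
qed

section \<open>The coactions of B_(u,a) and T\<close>

abbreviation Bua_tens_mult :: "nat \<Rightarrow> 'r::comm_ring_1 \<Rightarrow> 'r \<Rightarrow> 'r \<Rightarrow> _" where
  "Bua_tens_mult N q u a \<equiv> tens (Bua_mult N q u a) (taft_mult N q)"

abbreviation Bua_rho_vx :: "(nat \<times> nat) \<times> (nat \<times> nat) \<Rightarrow> 'r::comm_ring_1" where
  "Bua_rho_vx \<equiv> (\<lambda>c. bvec ((0, 0), (0, 1)) c + bvec ((0, 1), (1, 0)) c)"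

lemma Bua_rho_vg_power:
  fixes q u a :: "'r::comm_ring_1"
  assumes "i < N"
  shows "bpow (Bua_tens_mult N q u a) (bvec ((0, 0), (0, 0))) (bvec ((1, 0), (1, 0))) i
           = bvec ((i, 0), (i, 0))"
  using assms
proof (induction i)
  case (Suc i)
  have "Bua_tens_mult N q u a ((1, 0), (1, 0)) ((i, 0), (i, 0)) = bvec ((Suc i, 0), (Suc i, 0))"
    using Suc.prems by (auto simp: tens_def Bua_mult_def taft_mult_def bvec_def)
  thus ?case using Suc by (simp add: bpow_def bmult_bvec_bvec)
qed (simp add: bpow_def)

text \<open>(1 \<otimes> x + v_x \<otimes> g)^j is a combination of the v_x^b \<otimes> g^b x^n with b + n = j,
  in which 1 \<otimes> x^j has coefficient 1.\<close>
definition Bua_rho_vx_power_support :: "nat \<Rightarrow> ((nat \<times> nat) \<times> (nat \<times> nat)) set" where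
  "Bua_rho_vx_power_support j = {((0, b), (b, n)) | b n. b + n = j}"

lemma finite_Bua_rho_vx_power_support: "finite (Bua_rho_vx_power_support j)"
proof -
  have "Bua_rho_vx_power_support j \<subseteq> (\<lambda>b. ((0, b), (b, j - b))) ` {..j}"
    unfolding Bua_rho_vx_power_support_def by force
  thus ?thesis by (rule finite_subset) simp
qed

lemma Bua_rho_vx_power:
  fixes q u a :: "'r::comm_ring_1"
  assumes "j < N"
  defines "X \<equiv> bpow (Bua_tens_mult N q u a) (bvec ((0, 0), (0, 0))) Bua_rho_vx j"
  shows "bsupp X \<subseteq> Bua_rho_vx_power_support j" and "X ((0, 0), (0, j)) = 1"
proof -
  have "bsupp X \<subseteq> Bua_rho_vx_power_support j \<and> X ((0, 0), (0, j)) = 1"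
    using assms(1) unfolding X_def
  proof (induction j)
    case 0
    thus ?case by (auto simp: bpow_def bsupp_def bvec_def Bua_rho_vx_power_support_def)
  next
    case (Suc j)
    let ?X = "bpow (Bua_tens_mult N q u a) (bvec ((0, 0), (0, 0))) Bua_rho_vx j"
    have IH: "bsupp ?X \<subseteq> Bua_rho_vx_power_support j" "?X ((0, 0), (0, j)) = 1"
      using Suc by auto
    have X_Suc: "bpow (Bua_tens_mult N q u a) (bvec ((0, 0), (0, 0))) Bua_rho_vx (Suc j)
                   = bmult (Bua_tens_mult N q u a) Bua_rho_vx ?X"
      by (simp add: bpow_def)
    have vx_supp: "bsupp (Bua_rho_vx :: _ \<Rightarrow> 'r) \<subseteq> {((0, 0), (0, 1)), ((0, 1), (1, 0))}"
      by (auto simp: bsupp_def bvec_def)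
    have step: "b1 = ((0, 0), (0, 1)) \<and> c = ((0, b), (b, Suc n)) \<or>
                b1 = ((0, 1), (1, 0)) \<and> c = ((0, Suc b), (Suc b, n))"
      if b1: "b1 \<in> bsupp (Bua_rho_vx :: _ \<Rightarrow> 'r)" and bn: "b + n = j"
        and nz: "Bua_tens_mult N q u a b1 ((0, b), (b, n)) c \<noteq> 0" for b1 b n c
    proof -
      obtain c1 c2 c3 c4 where c: "c = ((c1, c2), (c3, c4))" by (cases c) auto
      from b1 vx_supp have "b1 = ((0, 0), (0, 1)) \<or> b1 = ((0, 1), (1, 0))" by blast
      thus ?thesis using bn nz Suc.prems
        by (elim disjE) (simp_all add: c tens_def Bua_mult_def taft_mult_def split: if_split_asm)
    qed
    have "bsupp (bmult (Bua_tens_mult N q u a) Bua_rho_vx ?X) \<subseteq> Bua_rho_vx_power_support (Suc j)"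
    proof
      fix c assume "c \<in> bsupp (bmult (Bua_tens_mult N q u a) Bua_rho_vx ?X)"
      hence "bmult (Bua_tens_mult N q u a) Bua_rho_vx ?X c \<noteq> 0" by (simp add: bsupp_def)
      then obtain b1 b2 where "b1 \<in> bsupp (Bua_rho_vx :: _ \<Rightarrow> 'r)" "b2 \<in> bsupp ?X"
        "Bua_tens_mult N q u a b1 b2 c \<noteq> 0"
        by (meson bmult_eq_0I)
      with IH(1) step show "c \<in> Bua_rho_vx_power_support (Suc j)"
        unfolding Bua_rho_vx_power_support_def by fastforce
    qed
    moreover have "bmult (Bua_tens_mult N q u a) Bua_rho_vx ?X ((0, 0), (0, Suc j))
                     = Bua_rho_vx ((0, 0), (0, 1)) * ?X ((0, 0), (0, j))
                       * Bua_tens_mult N q u a ((0, 0), (0, 1)) ((0, 0), (0, j)) ((0, 0), (0, Suc j))"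
    proof (rule bmult_eq_single_term)
      show "finite (bsupp (Bua_rho_vx :: _ \<Rightarrow> 'r))" using vx_supp by (rule finite_subset) simp
      show "finite (bsupp ?X)" using IH(1) finite_Bua_rho_vx_power_support by (rule finite_subset)
      fix b1 b2 assume "b1 \<in> bsupp (Bua_rho_vx :: _ \<Rightarrow> 'r)" "b2 \<in> bsupp ?X"
        "Bua_tens_mult N q u a b1 b2 ((0, 0), (0, Suc j)) \<noteq> 0"
      with IH(1) step show "b1 = ((0, 0), (0, 1)) \<and> b2 = ((0, 0), (0, j))"
        unfolding Bua_rho_vx_power_support_def by fastforce
    qed
    moreover have "\<dots> = 1"
      using IH(2) Suc.prems by (simp add: bvec_def tens_def Bua_mult_def taft_mult_def)
    ultimately show ?case using X_Suc by simp
  qed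
  thus "bsupp X \<subseteq> Bua_rho_vx_power_support j" "X ((0, 0), (0, j)) = 1" by auto
qed

lemma Bua_rho_basis_coeff:
  fixes q u a :: "'r::comm_ring_1"
  assumes "i < N" "j < N" "i' < N" "j' < N"
  shows "Bua_rho_basis N q u a (i, j) ((i', 0), (i', j')) = (if (i, j) = (i', j') then 1 else 0)"
proof -
  let ?X = "bpow (Bua_tens_mult N q u a) (bvec ((0, 0), (0, 0))) Bua_rho_vx j"
  note X = Bua_rho_vx_power[OF assms(2), where q = q and u = u and a = a]
  have "Bua_rho_basis N q u a (i, j) ((i', 0), (i', j'))
          = bmult (Bua_tens_mult N q u a) (bvec ((i, 0), (i, 0))) ?X ((i', 0), (i', j'))"
    unfolding Bua_rho_basis_def Let_def prod.case Bua_rho_vg_power[OF assms(1)] ..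
  also have "\<dots> = bvec ((i, 0), (i, 0)) ((i, 0::nat), (i, 0::nat)) * ?X ((0, 0), (0, j))
                   * Bua_tens_mult N q u a ((i, 0), (i, 0)) ((0, 0), (0, j)) ((i', 0), (i', j'))"
  proof (rule bmult_eq_single_term)
    show "finite (bsupp (bvec ((i, 0), (i, 0)) :: _ \<Rightarrow> 'r))" by (simp add: bsupp_def bvec_def)
    show "finite (bsupp ?X)" using X(1) finite_Bua_rho_vx_power_support by (rule finite_subset)
    fix b1 b2 assume b1: "b1 \<in> bsupp (bvec ((i, 0), (i, 0)) :: _ \<Rightarrow> 'r)" and b2: "b2 \<in> bsupp ?X"
      and nz: "Bua_tens_mult N q u a b1 b2 ((i', 0), (i', j')) \<noteq> 0"
    have "b1 = ((i, 0), (i, 0))" using b1 by (simp add: bsupp_def bvec_def split: if_splits)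
    moreover obtain b n where "b2 = ((0, b), (b, n))" "b + n = j"
      using b2 X(1) unfolding Bua_rho_vx_power_support_def by blast
    ultimately show "b1 = ((i, 0), (i, 0)) \<and> b2 = ((0, 0), (0, j))"
      using nz assms by (simp add: tens_def Bua_mult_def taft_mult_def split: if_split_asm)
  qed
  also have "\<dots> = (if (i, j) = (i', j') then 1 else 0)"
    using X(2) assms by (auto simp: bvec_def tens_def Bua_mult_def taft_mult_def)
  finally show ?thesis .
qed

lemma Bua_rho_coeff:
  assumes c: "c \<in> bcarrier (taft_basis N)" and "i < N" "j < N"
  shows "Bua_rho N q u a c ((i, 0), (i, j)) = c (i, j)"
proof -
  have "Bua_rho N q u a c ((i, 0), (i, j)) = (\<Sum>b\<in>bsupp c. if b = (i, j) then c b else 0)"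
    unfolding Bua_rho_def
  proof (rule sum.cong[OF refl])
    fix b assume "b \<in> bsupp c"
    with c obtain i' j' where "b = (i', j')" "i' < N" "j' < N"
      by (auto simp: bcarrier_def taft_basis_def)
    thus "c b * Bua_rho_basis N q u a b ((i, 0), (i, j)) = (if b = (i, j) then c b else 0)"
      using Bua_rho_basis_coeff[of i' N j' i j q u a] assms(2,3) by auto
  qed
  also have "\<dots> = c (i, j)" using c by (auto simp: bcarrier_def bsupp_def)
  finally show ?thesis .
qed

lemma taft_Delta_g:
  assumes "2 \<le> N"
  shows "taft_Delta N q (1, 0) = (bvec ((1, 0), (1, 0)) :: _ \<Rightarrow> 'r::comm_ring_1)"
proof -
  have "tens (taft_mult N q) (taft_mult N q) ((1, 0), (1, 0)) ((0, 0), (0, 0))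
          = (bvec ((1, 0), (1, 0)) :: _ \<Rightarrow> 'r)"
    using assms by (auto simp: tens_def taft_mult_def bvec_def)
  thus ?thesis by (simp add: taft_Delta_def bpow_def bmult_bvec_bvec)
qed

lemma T_delta_T_G:
  assumes "2 \<le> N"
  shows "T_delta N q T_G = (bvec ([(1, (1, 0))], (1, 0)) :: _ \<Rightarrow> 'r::comm_ring_1)"
proof -
  have letter: "T_delta_letter N q (1, (1, 0)) = (bvec ([(1, (1, 0))], (1, 0)) :: _ \<Rightarrow> 'r)"
  proof (intro ext, clarify)
    fix w :: "letter list" and h :: "nat \<times> nat"
    show "T_delta_letter N q (1, (1, 0)) (w, h) = (bvec ([(1, (1, 0))], (1, 0)) (w, h) :: 'r)"
      using taft_Delta_g[OF assms, where q = q, simplified]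
      by (auto simp: T_delta_letter_def bvec_def split: list.split)
  qed
  have "T_delta N q T_G = (T_delta_word N q [(1, (1, 0))] :: _ \<Rightarrow> 'r)"
    by (simp add: T_delta_def T_G_def bsupp_bvec) (simp add: bvec_def)
  also have "\<dots> = bmult (tens T_mult (taft_mult N q)) (bvec ([(1, (1, 0))], (1, 0))) (bvec ([], (0, 0)))"
    unfolding T_delta_word_def foldr_Cons foldr_Nil comp_apply id_apply letter ..
  also have "\<dots> = bvec ([(1, (1, 0))], (1, 0))"
    unfolding bmult_bvec_bvec using assms by (auto simp: tens_def T_mult_def taft_mult_def bvec_def)
  finally show ?thesis .
qed

lemma bpow_T_G: "bpow T_mult (bvec []) T_G n = (bvec (replicate n (1, (1, 0))) :: _ \<Rightarrow> 'r::comm_ring_1)"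
proof (induction n)
  case (Suc n)
  have "T_mult [(1, (1, 0))] (replicate n (1, (1, 0))) = (bvec (replicate (Suc n) (1, (1, 0))) :: _ \<Rightarrow> 'r)"
    by (auto simp: T_mult_def bvec_def)
  thus ?case using Suc by (simp add: bpow_def T_G_def bmult_bvec_bvec)
qed (simp add: bpow_def)

section \<open>Comodule algebra maps T \<rightarrow> B_(u,a)\<close>

lemma
  assumes "comod_alg_hom N q u a f"
  shows comod_alg_hom_bcarrier: "t \<in> bcarrier (T_basis N) \<Longrightarrow> f t \<in> bcarrier (taft_basis N)"
    and comod_alg_hom_add: "t \<in> bcarrier (T_basis N) \<Longrightarrow> t' \<in> bcarrier (T_basis N) \<Longrightarrow>
           f (\<lambda>w. t w + t' w) = (\<lambda>b. f t b + f t' b)"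
    and comod_alg_hom_scale: "t \<in> bcarrier (T_basis N) \<Longrightarrow> f (\<lambda>w. r * t w) = (\<lambda>b. r * f t b)"
    and comod_alg_hom_mult: "t \<in> bcarrier (T_basis N) \<Longrightarrow> t' \<in> bcarrier (T_basis N) \<Longrightarrow>
           f (bmult T_mult t t') = bmult (Bua_mult N q u a) (f t) (f t')"
    and comod_alg_hom_one: "f (bvec []) = bvec (0, 0)"
    and comod_alg_hom_coaction: "t \<in> bcarrier (T_basis N) \<Longrightarrow>
           Bua_rho N q u a (f t) = tens_id f (T_delta N q t)"
  using assms unfolding comod_alg_hom_def by blast+

lemma comod_alg_hom_zero:
  assumes "comod_alg_hom N q u a f"
  shows "f (\<lambda>w. 0) = (\<lambda>b. 0)"
proof -
  have "(\<lambda>w. 0) \<in> bcarrier (T_basis N)" by (simp add: bcarrier_def bsupp_def)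
  from comod_alg_hom_scale[OF assms this, of 0] show ?thesis by simp
qed

lemma comod_alg_hom_lincomb:
  assumes "comod_alg_hom N q u a f" "s \<in> bcarrier (T_basis N)" "t \<in> bcarrier (T_basis N)"
  shows "f (\<lambda>w. r * s w + r' * t w) = (\<lambda>b. r * f s b + r' * f t b)"
proof -
  have "(\<lambda>w. r * s w) \<in> bcarrier (T_basis N)" "(\<lambda>w. r' * t w) \<in> bcarrier (T_basis N)"
    using bcarrier_lincomb[OF assms(2) assms(2), of r 0] bcarrier_lincomb[OF assms(3) assms(3), of r' 0]
    by simp_all
  from comod_alg_hom_add[OF assms(1) this] show ?thesis
    using assms by (simp add: comod_alg_hom_scale)
qed

lemma T_G_in_bcarrier: "2 \<le> N \<Longrightarrow> (T_G :: _ \<Rightarrow> 'r::comm_ring_1) \<in> bcarrier (T_basis N)"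
  unfolding T_G_def by (intro bvec_in_bcarrier) (auto simp: T_basis_def taft_basis_def)

lemma bpow_T_G_in_bcarrier:
  assumes "2 \<le> N"
  shows "(bpow T_mult (bvec []) T_G n :: _ \<Rightarrow> 'r::comm_ring_1) \<in> bcarrier (T_basis N)"
  unfolding bpow_T_G using assms
  by (intro bvec_in_bcarrier) (auto simp: T_basis_def taft_basis_def)

text \<open>f is colinear and \<delta> G = G \<otimes> g, so f G is a multiple of v_g.\<close>
lemma comod_alg_hom_T_G:
  fixes f :: "(letter list \<Rightarrow> 'r::comm_ring_1) \<Rightarrow> nat \<times> nat \<Rightarrow> 'r"
  assumes N: "2 \<le> N" and f: "comod_alg_hom N q u a f"
  shows "f T_G = (\<lambda>b. if b = (1, 0) then f T_G (1, 0) else 0)"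
proof
  fix b :: "nat \<times> nat"
  obtain i j where b: "b = (i, j)" by (cases b)
  note G = T_G_in_bcarrier[OF N]
  have "f T_G (i, j) = 0" if "(i, j) \<noteq> (1, 0)"
  proof (cases "i < N \<and> j < N")
    case True
    have "f T_G (i, j) = Bua_rho N q u a (f T_G) ((i, 0), (i, j))"
      using Bua_rho_coeff[OF comod_alg_hom_bcarrier[OF f G]] True by simp
    also have "\<dots> = f (\<lambda>w. 0) (i, 0)"
    proof -
      have vanish: "(bvec ([(1, (1, 0))], (1, 0)) (w, (i, j)) :: 'r) = 0" for w
        using that by (simp add: bvec_def)
      show ?thesis
        by (simp only: comod_alg_hom_coaction[OF f G] T_delta_T_G[OF N] tens_id_def prod.case vanish)
    qed
    finally show ?thesis by (simp add: comod_alg_hom_zero[OF f])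
  next
    case False
    thus ?thesis
      using comod_alg_hom_bcarrier[OF f G] by (auto simp: bcarrier_def bsupp_def taft_basis_def)
  qed
  thus "f T_G b = (if b = (1, 0) then f T_G (1, 0) else 0)" using b by auto
qed

lemma comod_alg_hom_bpow_T_G:
  fixes f :: "(letter list \<Rightarrow> 'r::comm_ring_1) \<Rightarrow> nat \<times> nat \<Rightarrow> 'r"
  assumes N: "2 \<le> N" and f: "comod_alg_hom N q u a f"
  defines "c \<equiv> f T_G (1, 0)"
  shows "f (bpow T_mult (bvec []) T_G n) = (\<lambda>b. if b = (n mod N, 0) then c ^ n * u ^ (n div N) else 0)"
proof (induction n)
  case 0
  show ?case by (simp add: bpow_def comod_alg_hom_one[OF f]) (auto simp: bvec_def)
next
  case (Suc n)
  note G = T_G_in_bcarrier[OF N]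
  have "f (bpow T_mult (bvec []) T_G (Suc n)) = bmult (Bua_mult N q u a) (f T_G) (f (bpow T_mult (bvec []) T_G n))"
    using comod_alg_hom_mult[OF f G bpow_T_G_in_bcarrier[OF N]] by (simp add: bpow_def)
  also have "\<dots> = (\<lambda>b. c * (c ^ n * u ^ (n div N)) * Bua_mult N q u a (1, 0) (n mod N, 0) b)"
  proof -
    have "f T_G = (\<lambda>b. if b = (1, 0) then c else 0)"
      unfolding c_def by (rule comod_alg_hom_T_G[OF N f])
    thus ?thesis unfolding Suc.IH by (simp add: bmult_single_single)
  qed
  also have "\<dots> = (\<lambda>b. if b = (Suc n mod N, 0) then c ^ Suc n * u ^ (Suc n div N) else 0)"
  proof -
    have "n mod N < N" using N by simp
    thus ?thesis by (auto simp: fun_eq_iff Bua_mult_def mod_Suc div_Suc)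
  qed
  finally show ?case .
qed

lemma comod_alg_hom_Q_poly:
  fixes f :: "(letter list \<Rightarrow> 'r::comm_ring_1) \<Rightarrow> nat \<times> nat \<Rightarrow> 'r"
  assumes N: "2 \<le> N" and f: "comod_alg_hom N q u a f" and "N dvd \<alpha>"
  defines "c \<equiv> f T_G (1, 0)"
  shows "f (Q_poly u (\<alpha> div N) \<alpha> \<beta>)
           = (\<lambda>b. if b = (\<beta> mod N, 0)
                   then u ^ (\<alpha> div N) * ((1 - c ^ \<alpha>) * c ^ \<beta>) * u ^ (\<beta> div N) else 0)"
proof -
  let ?G = "\<lambda>n. bpow T_mult (bvec []) T_G n :: _ \<Rightarrow> 'r"
  let ?A = "\<lambda>w. u ^ (\<alpha> div N) * ?G 0 w + (- 1) * ?G \<alpha> w"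
  note G_power = comod_alg_hom_bpow_T_G[OF N f, folded c_def]
  have A_carrier: "?A \<in> bcarrier (T_basis N)"
    by (intro bcarrier_lincomb bpow_T_G_in_bcarrier N)
  have "f ?A = (\<lambda>b. u ^ (\<alpha> div N) * f (?G 0) b + (- 1) * f (?G \<alpha>) b)"
    by (rule comod_alg_hom_lincomb[OF f bpow_T_G_in_bcarrier[OF N] bpow_T_G_in_bcarrier[OF N]])
  also have "\<dots> = (\<lambda>b. if b = (0, 0) then u ^ (\<alpha> div N) * (1 - c ^ \<alpha>) else 0)"
    using \<open>N dvd \<alpha>\<close> by (auto simp: G_power fun_eq_iff right_diff_distrib)
  finally have f_A: "f ?A = \<dots>" .
  have "Q_poly u (\<alpha> div N) \<alpha> \<beta> = bmult T_mult ?A (?G \<beta>)"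
    by (simp add: Q_poly_def bpow_def)
  hence "f (Q_poly u (\<alpha> div N) \<alpha> \<beta>) = bmult (Bua_mult N q u a) (f ?A) (f (?G \<beta>))"
    using comod_alg_hom_mult[OF f A_carrier bpow_T_G_in_bcarrier[OF N]] by simp
  also have "\<dots> = (\<lambda>b. if b = (\<beta> mod N, 0)
                   then u ^ (\<alpha> div N) * ((1 - c ^ \<alpha>) * c ^ \<beta>) * u ^ (\<beta> div N) else 0)"
  proof -
    have "\<beta> mod N < N" using N by simp
    thus ?thesis unfolding f_A G_power bmult_single_single
      by (auto simp: Bua_mult_def fun_eq_iff mult.assoc)
  qed
  finally show ?thesis .
qed

theorem proposition3p5:
  fixes N :: nat and q u a :: "'r::{comm_ring_1, finite}"
  assumes "2 \<le> N"
    and "(of_nat N :: 'r) dvd 1"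
    and "poly (map_poly of_int (cyclotomic_poly N)) q = 0"
    and "u dvd 1"
  shows "poly_H_identity N q u a
           (Q_poly u (units_exponent TYPE('r) div N) (units_exponent TYPE('r))
                     (nilpotence_index TYPE('r)))"
proof -
  let ?\<alpha> = "units_exponent TYPE('r)" and ?\<beta> = "nilpotence_index TYPE('r)"
  have q_order: "q ^ m = 1 \<longleftrightarrow> N dvd m" for m
    using cyclotomic_root_power_eq_one_iff[OF _ assms(2,3)] assms(1) by simp
  have "q ^ N = 1" using q_order by simp
  hence "q ^ (N - 1) * q = 1" using assms(1) power_minus_mult[of N q] by simp
  hence "q dvd 1" by (metis dvd_triv_right)
  hence "N dvd ?\<alpha>" using q_order[of ?\<alpha>] by (simp add: power_units_exponent)
  show ?thesis
    unfolding poly_H_identity_def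
  proof (intro allI impI)
    fix f :: "(letter list \<Rightarrow> 'r) \<Rightarrow> nat \<times> nat \<Rightarrow> 'r"
    assume f: "comod_alg_hom N q u a f"
    have "(1 - c ^ ?\<alpha>) * c ^ ?\<beta> = 0" for c :: 'r
      using power_units_exponent_mult_power_nilpotence_index[of c] by (simp add: left_diff_distrib)
    thus "f (Q_poly u (?\<alpha> div N) ?\<alpha> ?\<beta>) = (\<lambda>_. 0)"
      unfolding comod_alg_hom_Q_poly[OF assms(1) f \<open>N dvd ?\<alpha>\<close>] by (simp add: fun_eq_iff)
  qed
qed

end
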